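(* Consider the setting and Algorithm DRDGA described in the context, under Assumptions A1 and A2. Suppose the stepsize sequence $\{\beta[t]\}_{t>0}$ is positive, non-increasing and satisfies $\lim_{t\to\infty}\beta[t]=0$. Then there is a positive constant $D$ such that for all $i=1,\dots,m$, $$\sup_{t}\|\lambda_i[t]\|\le D.$$
   Context: Problem: $m$ agents; agent $i$ has a function $f_i:\mathbb{R}^{n_i}\to\mathbb{R}$, a set $\mathbf{X}_i\subseteq\mathbb{R}^{n_i}$, a matrix $A_i\in\mathbb{R}^{p\times n_i}$ and a vector $\mathbf{b}_i\in\mathbb{R}^p$. The problem is $\min_{\mathbf{x}_i\in\mathbf{X}_i,\,i=1,\dots,m} F(\mathbf{x}):=\sum_{i=1}^m f_i(\mathbf{x}_i)$ subject to $\sum_{i=1}^m (A_i\mathbf{x}_i-\mathbf{b}_i)=0$, where $\mathbf{x}=(\mathbf{x}_1,\dots,\mathbf{x}_m)$. Regularization parameters $\gamma_i>0$ are fixed; $\mathcal{L}_i(\mathbf{x}_i,\lambda)=f_i(\mathbf{x}_i)+\lambda^\top(A_i\mathbf{x}_i-\mathbf{b}_i)-\frac{\gamma_i}{2}\lambda^\top\lambda$ for $\lambda\in\mathbb{R}^p$. Assumption A1: each $f_i$ is $\tau_i$-strongly convex ($\tau_i>0$), and each $\mathbf{X}_i$ is nonempty, convex and compact. (Consequently there are constants $G_i>0$ with $\|A_i\mathbf{x}_i-\mathbf{b}_i\|\le G_i$ for all $\mathbf{x}_i\in\mathbf{X}_i$.) Network: a sequence of directed graphs $\mathcal{G}[t]=(\{1,\dots,m\},\mathcal{E}[t])$.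 Out-neighbors $\mathcal{N}_i^{out}[t]=\{j:(i,j)\in\mathcal{E}[t]\}\cup\{i\}$, in-neighbors $\mathcal{N}_i^{in}[t]=\{j:(j,i)\in\mathcal{E}[t]\}\cup\{i\}$, out-degree $d_i[t]=|\mathcal{N}_i^{out}[t]|$. Weight matrix $W[t]$: $(W[t])_{ij}=1/d_j[t]$ if $j\in\mathcal{N}_i^{in}[t]$ and $0$ otherwise (so $W[t]$ is column stochastic). Assumption A2: each agent $i$ knows $d_i[t]$ for every $t$, and there is an integer $B_c>0$ such that for every $k\ge0$ the graph with vertex set $\{1,\dots,m\}$ and edge set $\bigcup_{l=kB_c}^{(k+1)B_c-1}\mathcal{E}[l]$ is strongly connected. Algorithm DRDGA: initialize $\theta_i[0]\in\mathbb{R}^p$ arbitrary and $\rho_i[0]=1$ for all $i$. For $t=0,1,2,\dots$ and each $i$: $\mathbf{u}_i[t+1]=\sum_{j=1}^m (W[t])_{ij}\theta_j[t]$; $\rho_i[t+1]=\sum_{j=1}^m (W[t])_{ij}\rho_j[t]$; $\lambda_i[t+1]=\mathbf{u}_i[t+1]/\rho_i[t+1]$; $\mathbf{x}_i[t+1]=\arg\min_{\mathbf{x}_i\in\mathbf{X}_i}\mathcal{L}_i(\mathbf{x}_i,\lambda_i[t+1])$; $\theta_i[t+1]=\mathbf{u}_i[t+1]+\beta[t+1]\big(A_i\mathbf{x}_i[t+1]-\mathbf{b}_i-\gamma_i\lambda_i[t+1]\big)$, where $\beta[t]>0$ are stepsizes. *)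

theory Defs
  imports "HOL-Analysis.Analysis"
begin

text \<open>Vectors of R^n are represented as functions nat => real vanishing from index n on
  (coordinates 0..n-1).  R^p (the multiplier space) is real^'p.\<close>

definition inRn :: "nat \<Rightarrow> (nat \<Rightarrow> real) \<Rightarrow> bool" where
  "inRn n x \<longleftrightarrow> (\<forall>j\<ge>n. x j = 0)"

definition enorm :: "nat \<Rightarrow> (nat \<Rightarrow> real) \<Rightarrow> real" where
  "enorm n x = sqrt (\<Sum>j<n. (x j)^2)"

definition cvx :: "real \<Rightarrow> (nat \<Rightarrow> real) \<Rightarrow> real \<Rightarrow> (nat \<Rightarrow> real) \<Rightarrow> (nat \<Rightarrow> real)" where
  "cvx \<theta> x \<mu> y = (\<lambda>j. \<theta> * x j + \<mu> * y j)"

definition strongly_convex_Rn :: "nat \<Rightarrow> real \<Rightarrow> ((nat \<Rightarrow> real) \<Rightarrow> real) \<Rightarrow> bool" where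
  "strongly_convex_Rn n \<tau> f \<longleftrightarrow>
     (\<forall>x y \<theta>. inRn n x \<longrightarrow> inRn n y \<longrightarrow> 0 \<le> \<theta> \<longrightarrow> \<theta> \<le> 1 \<longrightarrow>
        f (cvx \<theta> x (1 - \<theta>) y) \<le> \<theta> * f x + (1 - \<theta>) * f y
          - \<tau> / 2 * \<theta> * (1 - \<theta>) * (enorm n (\<lambda>j. x j - y j))^2)"

definition convex_Rn :: "(nat \<Rightarrow> real) set \<Rightarrow> bool" where
  "convex_Rn X \<longleftrightarrow> (\<forall>x\<in>X. \<forall>y\<in>X. \<forall>\<theta>. 0 \<le> \<theta> \<longrightarrow> \<theta> \<le> 1 \<longrightarrow> cvx \<theta> x (1 - \<theta>) y \<in> X)"

definition matvec :: "('p::finite \<Rightarrow> nat \<Rightarrow> real) \<Rightarrow> nat \<Rightarrow> (nat \<Rightarrow> real) \<Rightarrow> real^'p" where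
  "matvec A n x = (\<chi> k. \<Sum>j<n. A k j * x j)"

definition lagr :: "((nat \<Rightarrow> real) \<Rightarrow> real) \<Rightarrow> ('p::finite \<Rightarrow> nat \<Rightarrow> real) \<Rightarrow> nat \<Rightarrow> real^'p
                    \<Rightarrow> real \<Rightarrow> (nat \<Rightarrow> real) \<Rightarrow> real^'p \<Rightarrow> real" where
  "lagr f A n b \<gamma> x l = f x + l \<bullet> (matvec A n x - b) - \<gamma> / 2 * (l \<bullet> l)"

text \<open>Graph notions; agents are 1..m, E t is the edge set of G[t].\<close>
definition Nout :: "(nat \<Rightarrow> (nat \<times> nat) set) \<Rightarrow> nat \<Rightarrow> nat \<Rightarrow> nat set" where
  "Nout E t i = {j. (i, j) \<in> E t} \<union> {i}"

definition Nin :: "(nat \<Rightarrow> (nat \<times> nat) set) \<Rightarrow> nat \<Rightarrow> nat \<Rightarrow> nat set" where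
  "Nin E t i = {j. (j, i) \<in> E t} \<union> {i}"

definition outdeg :: "(nat \<Rightarrow> (nat \<times> nat) set) \<Rightarrow> nat \<Rightarrow> nat \<Rightarrow> nat" where
  "outdeg E t i = card (Nout E t i)"

definition Wmat :: "(nat \<Rightarrow> (nat \<times> nat) set) \<Rightarrow> nat \<Rightarrow> nat \<Rightarrow> nat \<Rightarrow> real" where
  "Wmat E t i j = (if j \<in> Nin E t i then 1 / real (outdeg E t j) else 0)"

definition B_strongly_connected :: "nat \<Rightarrow> (nat \<Rightarrow> (nat \<times> nat) set) \<Rightarrow> nat \<Rightarrow> bool" where
  "B_strongly_connected m E B \<longleftrightarrow>
     (\<forall>k. \<forall>i\<in>{1..m}. \<forall>j\<in>{1..m}. (i, j) \<in> (\<Union>l\<in>{k*B..<(k+1)*B}. E l)\<^sup>*)"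

end

theory Submission
  imports Defs
begin

text \<open>The push-sum weights \<open>\<rho>\<close> sum to \<open>m\<close>, so some agent always carries weight \<open>\<ge> 1\<close>;
  thanks to the self-loops every weight shrinks by at most a factor \<open>1/m\<close> per step, and
  \<open>B\<close>-strong connectivity passes a \<open>(1/m)\<^sup>B\<close> fraction to a new agent in every window.
  Hence all weights stay above \<open>(1/m)^(mB)\<close>. Since \<open>\<beta> \<rightarrow> 0\<close>, eventually \<open>\<beta> \<gamma>\<^sub>i \<le> \<rho>\<^sub>i\<close>,
  and from then on \<open>\<theta>\<^sub>i[t+1] = (\<rho>\<^sub>i - \<beta> \<gamma>\<^sub>i) \<lambda>\<^sub>i + \<beta> (A\<^sub>i x\<^sub>i - b\<^sub>i)\<close> with nonnegative
  coefficients. So the invariant \<open>\<parallel>\<theta>\<^sub>j\<parallel> \<le> C \<rho>\<^sub>j\<close> survives mixing and the local update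
  once \<open>C\<close> dominates \<open>G/\<gamma>\<^sub>i\<close>, and dividing by \<open>\<rho>\<^sub>i\<close> gives \<open>\<parallel>\<lambda>\<^sub>i\<parallel> \<le> C\<close>.\<close>

lemma norm_relaxation_le:
  fixes l g :: "'a::real_normed_vector"
  assumes "0 \<le> \<beta>" "\<beta> * \<gamma> \<le> r" "norm l \<le> C" "norm g \<le> \<gamma> * C"
  shows "norm ((r - \<beta> * \<gamma>) *\<^sub>R l + \<beta> *\<^sub>R g) \<le> C * r"
proof -
  have "norm ((r - \<beta> * \<gamma>) *\<^sub>R l + \<beta> *\<^sub>R g) \<le> (r - \<beta> * \<gamma>) * norm l + \<beta> * norm g"
    using norm_triangle_ineq[of "(r - \<beta> * \<gamma>) *\<^sub>R l" "\<beta> *\<^sub>R g"] assms(1,2) by simp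
  also have "\<dots> \<le> (r - \<beta> * \<gamma>) * C + \<beta> * (\<gamma> * C)"
    using assms by (intro add_mono mult_left_mono) auto
  finally show ?thesis by (simp add: algebra_simps)
qed

lemma bounded_matvec_residual_image:
  assumes "compact X"
  shows "bounded ((\<lambda>y. matvec A n y - b) ` X)"
proof -
  have "continuous_on UNIV (\<lambda>y::nat\<Rightarrow>real. matvec A n y - b)"
    unfolding matvec_def by (intro continuous_intros continuous_on_product_coordinates)
  then show ?thesis
    using assms by (intro compact_imp_bounded compact_continuous_image) (auto elim: continuous_on_subset)
qed

lemma eventually_bounded_family_imp_bounded:
  fixes a :: "'i \<Rightarrow> nat \<Rightarrow> 'a::real_normed_vector"
  assumes "finite I" "\<forall>i\<in>I. \<forall>t\<ge>N. norm (a i t) \<le> C"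
  shows "\<exists>D>0. \<forall>i\<in>I. \<forall>t. norm (a i t) \<le> D"
proof -
  define S where "S = (\<Sum>i\<in>I. \<Sum>t\<le>N. norm (a i t))"
  have S_nonneg: "0 \<le> S" unfolding S_def by (intro sum_nonneg) auto
  have "norm (a i t) \<le> max C 0 + S + 1" if i: "i \<in> I" for i t
  proof (cases "t \<le> N")
    case True
    have "norm (a i t) \<le> (\<Sum>t\<le>N. norm (a i t))"
      using True by (intro member_le_sum[where f="\<lambda>t. norm (a i t)"]) auto
    also have "\<dots> \<le> S"
      unfolding S_def using i assms(1) by (intro member_le_sum) (auto intro: sum_nonneg)
    finally show ?thesis by linarith
  next
    case False
    have "norm (a i t) \<le> C" using assms(2) i False by simp
    then show ?thesis using S_nonneg by linarith
  qed
  moreover have "0 < max C 0 + S + 1" using S_nonneg max.cobounded2[of 0 C] by linarith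
  ultimately show ?thesis by blast
qed

lemma rtrancl_leaves_set:
  assumes "(x,y) \<in> R\<^sup>*" "x \<in> S" "y \<notin> S"
  shows "\<exists>a c. (a,c) \<in> R \<and> a \<in> S \<and> c \<notin> S"
  using assms by (induction rule: rtrancl_induct) blast+

locale push_sum =
  fixes m :: nat and E :: "nat \<Rightarrow> (nat \<times> nat) set" and B :: nat and \<rho> :: "nat \<Rightarrow> nat \<Rightarrow> real"
  assumes mpos: "m > 0"
    and edges: "\<forall>t. E t \<subseteq> {1..m} \<times> {1..m}"
    and Bpos: "B > 0" and conn: "B_strongly_connected m E B"
    and rho0: "\<forall>i\<in>{1..m}. \<rho> i 0 = 1"
    and rho_upd: "\<forall>t. \<forall>i\<in>{1..m}. \<rho> i (t+1) = (\<Sum>j\<in>{1..m}. Wmat E t i j * \<rho> j t)"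
begin

abbreviation "V \<equiv> {1..m}"

lemma Nout_subset: "j \<in> V \<Longrightarrow> Nout E t j \<subseteq> V"
  using edges unfolding Nout_def by blast

lemma outdeg_bounds: assumes "j \<in> V" shows "1 \<le> outdeg E t j" "outdeg E t j \<le> m"
proof -
  have f: "finite (Nout E t j)" using Nout_subset[OF assms] finite_subset by blast
  have "j \<in> Nout E t j" by (simp add: Nout_def)
  then show "1 \<le> outdeg E t j" unfolding outdeg_def using f
    by (metis One_nat_def Suc_leI card_gt_0_iff empty_iff)
  show "outdeg E t j \<le> m" unfolding outdeg_def using card_mono[OF _ Nout_subset[OF assms]] by simp
qed

lemma Wmat_nonneg: "Wmat E t i j \<ge> 0"
  by (simp add: Wmat_def)

lemma Wmat_edge_ge: assumes "j \<in> V" "(j,i) \<in> E t \<or> j = i" shows "Wmat E t i j \<ge> 1 / real m"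
proof -
  have "j \<in> Nin E t i" using assms(2) by (auto simp: Nin_def)
  then have "Wmat E t i j = 1 / real (outdeg E t j)" by (simp add: Wmat_def)
  moreover have "real (outdeg E t j) \<le> real m" "real (outdeg E t j) \<ge> 1"
    using outdeg_bounds[OF assms(1)] by auto
  ultimately show ?thesis by (simp add: frac_le)
qed

lemma rho_nonneg: "i \<in> V \<Longrightarrow> \<rho> i t \<ge> 0"
proof (induction t arbitrary: i)
  case 0 then show ?case using rho0 by simp
next
  case (Suc t)
  have "\<rho> i (Suc t) = (\<Sum>j\<in>V. Wmat E t i j * \<rho> j t)" using rho_upd Suc.prems by simp
  also have "\<dots> \<ge> 0" using Suc.IH Wmat_nonneg by (intro sum_nonneg) auto
  finally show ?case .
qed

lemma rho_Suc_ge_edge: assumes "a \<in> V" "c \<in> V" "(a,c) \<in> E t \<or> a = c"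
  shows "\<rho> c (Suc t) \<ge> (1 / real m) * \<rho> a t"
proof -
  have "\<rho> c (Suc t) = (\<Sum>j\<in>V. Wmat E t c j * \<rho> j t)" using rho_upd assms(2) by simp
  also have "\<dots> \<ge> Wmat E t c a * \<rho> a t"
    by (rule member_le_sum[where f="\<lambda>j. Wmat E t c j * \<rho> j t"])
      (use assms(1) Wmat_nonneg rho_nonneg in auto)
  moreover have "Wmat E t c a * \<rho> a t \<ge> (1 / real m) * \<rho> a t"
    using Wmat_edge_ge[OF assms(1,3)] rho_nonneg[OF assms(1)] by (intro mult_right_mono)
  ultimately show ?thesis by linarith
qed

lemma rho_add_ge_power: "a \<in> V \<Longrightarrow> \<rho> a (t+s) \<ge> (1 / real m)^s * \<rho> a t"
proof (induction s)
  case 0 then show ?case by simp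
next
  case (Suc s)
  have "\<rho> a (Suc (t+s)) \<ge> (1 / real m) * \<rho> a (t+s)"
    using rho_Suc_ge_edge[of a a "t+s"] Suc.prems by auto
  moreover have "(1 / real m) * \<rho> a (t+s) \<ge> (1 / real m) * ((1 / real m)^s * \<rho> a t)"
    using Suc by (intro mult_left_mono) auto
  ultimately show ?case by simp
qed

lemma Wmat_column_sum: assumes "j \<in> V" shows "(\<Sum>i\<in>V. Wmat E t i j) = 1"
proof -
  have w: "\<And>i. Wmat E t i j = (if i \<in> Nout E t j then 1 / real (outdeg E t j) else 0)"
    by (auto simp: Wmat_def Nin_def Nout_def)
  have "(\<Sum>i\<in>V. Wmat E t i j) = (\<Sum>i\<in>V \<inter> Nout E t j. 1 / real (outdeg E t j))"
    by (simp only: w sum.inter_restrict finite_atLeastAtMost)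
  also have "V \<inter> Nout E t j = Nout E t j" using Nout_subset[OF assms, of t] by blast
  also have "(\<Sum>i\<in>Nout E t j. 1 / real (outdeg E t j)) = 1"
    using outdeg_bounds[OF assms, of t] by (simp add: outdeg_def)
  finally show ?thesis .
qed

lemma rho_sum_eq: "(\<Sum>i\<in>V. \<rho> i t) = real m"
proof (induction t)
  case 0 then show ?case using rho0 by simp
next
  case (Suc t)
  have "(\<Sum>i\<in>V. \<rho> i (Suc t)) = (\<Sum>i\<in>V. \<Sum>j\<in>V. Wmat E t i j * \<rho> j t)"
    using rho_upd by simp
  also have "\<dots> = (\<Sum>j\<in>V. \<Sum>i\<in>V. Wmat E t i j * \<rho> j t)" by (rule sum.swap)
  also have "\<dots> = (\<Sum>j\<in>V. (\<Sum>i\<in>V. Wmat E t i j) * \<rho> j t)" by (simp add: sum_distrib_right)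
  also have "\<dots> = (\<Sum>j\<in>V. \<rho> j t)" using Wmat_column_sum by simp
  finally show ?case using Suc by simp
qed

lemma rho_ge_1_somewhere: "\<exists>j\<in>V. \<rho> j t \<ge> 1"
proof (rule ccontr)
  assume "\<not> ?thesis"
  then have "\<forall>j\<in>V. \<rho> j t < 1" by auto
  then have "(\<Sum>i\<in>V. \<rho> i t) < (\<Sum>i\<in>V. 1)" using mpos by (intro sum_strict_mono) auto
  then show False using rho_sum_eq by simp
qed

lemma rho_spreads_over_window:
  assumes "S \<subseteq> V" "S \<noteq> V" "S \<noteq> {}" "\<forall>a\<in>S. \<rho> a (k*B) \<ge> cc"
  shows "\<exists>c'\<in>V - S. \<rho> c' (k*B+B) \<ge> (1/real m)^B * cc"
proof -
  obtain i where i: "i \<in> S" using assms(3) by auto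
  obtain j where j: "j \<in> V" "j \<notin> S" using assms(1,2) by blast
  have "(i,j) \<in> (\<Union>l\<in>{k*B..<(k+1)*B}. E l)\<^sup>*" using conn i j assms(1)
    unfolding B_strongly_connected_def by blast
  from rtrancl_leaves_set[OF this i j(2)] obtain a c l where
    ac: "(a,c) \<in> E l" "a \<in> S" "c \<notin> S" "l \<in> {k*B..<(k+1)*B}" by blast
  have aV: "a \<in> V" "c \<in> V" using ac edges by blast+
  define q where "q = l - k*B"
  have q: "l = k*B + q" "q < B" using ac(4) unfolding q_def by auto
  let ?r = "1 / real m"
  have r0: "?r \<ge> 0" by simp
  have g1: "\<rho> a l \<ge> ?r^q * \<rho> a (k*B)" using rho_add_ge_power[OF aV(1)] q by simp
  have "?r^q * \<rho> a (k*B) \<ge> ?r^q * cc" using assms(4) ac(2) r0 by (intro mult_left_mono) auto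
  with g1 have h1: "\<rho> a l \<ge> ?r^q * cc" by linarith
  have g2: "\<rho> c (Suc l) \<ge> ?r * \<rho> a l" using rho_Suc_ge_edge[OF aV] ac by auto
  have "?r * \<rho> a l \<ge> ?r * (?r^q * cc)" using h1 r0 by (intro mult_left_mono) auto
  with g2 have h2: "\<rho> c (Suc l) \<ge> ?r * (?r^q * cc)" by linarith
  have g3: "\<rho> c (Suc l + (B - q - 1)) \<ge> ?r^(B-q-1) * \<rho> c (Suc l)" by (rule rho_add_ge_power[OF aV(2)])
  have e: "Suc l + (B - q - 1) = k*B+B" using q by simp
  have "?r^(B-q-1) * \<rho> c (Suc l) \<ge> ?r^(B-q-1) * (?r * (?r^q * cc))" using h2 r0 by (intro mult_left_mono) auto
  with g3 e have "\<rho> c (k*B+B) \<ge> ?r^(B-q-1) * (?r * (?r^q * cc))" by simp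
  moreover have "?r^(B-q-1) * (?r * (?r^q * cc)) = ?r^B * cc"
  proof -
    have "B = (B-q-1) + 1 + q" using q by simp
    then have "?r^B = ?r^(B-q-1) * ?r * ?r^q" by (metis power_add power_one_right)
    then show ?thesis by simp
  qed
  ultimately show ?thesis using aV ac by auto
qed

lemma rho_lower_on_growing_set:
  "\<exists>S\<subseteq>V. (S = V \<or> card S \<ge> r+1) \<and> S \<noteq> {} \<and> (\<forall>a\<in>S. \<rho> a ((k+r)*B) \<ge> (1/real m)^(r*B))"
proof (induction r)
  case 0
  obtain j where "j \<in> V" "\<rho> j (k*B) \<ge> 1" using rho_ge_1_somewhere by blast
  then show ?case by (intro exI[of _ "{j}"]) auto
next
  case (Suc r)
  then obtain S where S: "S \<subseteq> V" "S = V \<or> card S \<ge> r+1" "S \<noteq> {}"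
    "\<forall>a\<in>S. \<rho> a ((k+r)*B) \<ge> (1/real m)^(r*B)" by blast
  let ?r = "1 / real m"
  have t: "(k + Suc r)*B = (k+r)*B + B" by simp
  have pw: "?r^(Suc r * B) = ?r^B * ?r^(r*B)" by (simp add: power_add)
  have keep: "\<forall>a\<in>S. \<rho> a ((k + Suc r)*B) \<ge> ?r^(Suc r * B)"
  proof
    fix a assume a: "a \<in> S"
    have "\<rho> a ((k+r)*B + B) \<ge> ?r^B * \<rho> a ((k+r)*B)" using rho_add_ge_power S(1) a by blast
    moreover have "?r^B * \<rho> a ((k+r)*B) \<ge> ?r^B * ?r^(r*B)" using S(4) a by (intro mult_left_mono) auto
    ultimately have "?r^B * ?r^(r*B) \<le> \<rho> a ((k+r)*B + B)" by linarith
    then show "\<rho> a ((k + Suc r)*B) \<ge> ?r^(Suc r * B)" by (simp only: t pw)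
  qed
  show ?case
  proof (cases "S = V")
    case True then show ?thesis using keep S by blast
  next
    case False
    then have c: "card S \<ge> r+1" using S by auto
    from rho_spreads_over_window[OF S(1) False S(3), where k="k+r" and cc="?r^(r*B)"] S(4)
    obtain c' where c': "c' \<in> V - S" "\<rho> c' ((k+r)*B+B) \<ge> ?r^B * ?r^(r*B)" by blast
    have fin: "finite S" using S(1) finite_subset by blast
    have "card (insert c' S) = card S + 1" using fin c' by simp
    moreover have "\<rho> c' ((k + Suc r)*B) \<ge> ?r^(Suc r * B)" using c'(2) by (simp only: t pw)
    ultimately show ?thesis using c c' keep S(1) t pw
      by (intro exI[of _ "insert c' S"]) auto
  qed
qed

lemma rho_lower_after_mixing: "\<forall>a\<in>V. \<rho> a ((k+(m-1))*B) \<ge> (1/real m)^((m-1)*B)"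
proof -
  obtain S where S: "S\<subseteq>V" "S = V \<or> card S \<ge> (m-1)+1"
     "\<forall>a\<in>S. \<rho> a ((k+(m-1))*B) \<ge> (1/real m)^((m-1)*B)"
    using rho_lower_on_growing_set[where r="m-1" and k=k] by blast
  have "S = V"
  proof (cases "S = V")
    case False
    from S(2) False have "card S \<ge> (m-1)+1" by blast
    then have "card V \<le> card S" using mpos by simp
    then show ?thesis by (rule card_seteq[OF finite_atLeastAtMost S(1)])
  qed
  then show ?thesis using S by simp
qed

lemma rho_uniform_lower: assumes "a \<in> V" shows "\<rho> a t \<ge> (1/real m)^(m*B)"
proof -
  let ?r = "1 / real m"
  have r: "?r \<ge> 0" "?r \<le> 1" using mpos by auto
  show ?thesis
  proof (cases "t \<ge> (m-1)*B")
    case True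
    define k where "k = t div B - (m-1)"
    have "m-1 \<le> t div B" using div_le_mono[OF True, of B] Bpos by simp
    then have kk: "(k+(m-1))*B = (t div B)*B" unfolding k_def by simp
    have tt: "(k+(m-1))*B + t mod B = t" by (simp only: kk div_mult_mod_eq)
    have "\<rho> a ((k+(m-1))*B + t mod B) \<ge> ?r^(t mod B) * \<rho> a ((k+(m-1))*B)"
      by (rule rho_add_ge_power[OF assms])
    then have g1: "\<rho> a t \<ge> ?r^(t mod B) * \<rho> a ((k+(m-1))*B)" by (simp only: tt)
    have g2: "?r^(t mod B) * \<rho> a ((k+(m-1))*B) \<ge> ?r^(t mod B) * ?r^((m-1)*B)"
      using rho_lower_after_mixing assms r by (intro mult_left_mono) auto
    have g3: "?r^(t mod B) \<ge> ?r^B" using r Bpos by (intro power_decreasing) (auto intro: less_imp_le)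
    have g4: "?r^(t mod B) * ?r^((m-1)*B) \<ge> ?r^B * ?r^((m-1)*B)"
      using g3 r by (intro mult_right_mono) auto
    have mB: "m*B = B + (m-1)*B" using mpos by (cases m) auto
    have g5: "?r^(m*B) = ?r^B * ?r^((m-1)*B)" unfolding mB power_add ..
    show ?thesis using g1 g2 g4 g5 by linarith
  next
    case False
    have "\<rho> a (0+t) \<ge> ?r^t * \<rho> a 0" using rho_add_ge_power[OF assms] by blast
    moreover have "\<rho> a 0 = 1" using rho0 assms by simp
    moreover have "?r^t \<ge> ?r^(m*B)" using r False by (intro power_decreasing) (auto simp: algebra_simps)
    ultimately show ?thesis by simp
  qed
qed

lemma rho_pos: "i \<in> V \<Longrightarrow> \<rho> i t > 0"
  using rho_uniform_lower[of i t] mpos by (smt (verit) zero_less_divide_1_iff of_nat_0_less_iff zero_less_power)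

lemma norm_mix_le:
  assumes "i \<in> V" "\<forall>j\<in>V. norm (v j) \<le> C * \<rho> j t"
  shows "norm (\<Sum>j\<in>V. Wmat E t i j *\<^sub>R v j) \<le> C * \<rho> i (Suc t)"
proof -
  have "norm (\<Sum>j\<in>V. Wmat E t i j *\<^sub>R v j) \<le> (\<Sum>j\<in>V. Wmat E t i j * norm (v j))"
    using norm_sum[of "\<lambda>j. Wmat E t i j *\<^sub>R v j" V] Wmat_nonneg by simp
  also have "\<dots> \<le> (\<Sum>j\<in>V. Wmat E t i j * (C * \<rho> j t))"
    using assms(2) Wmat_nonneg by (intro sum_mono mult_left_mono) auto
  also have "\<dots> = C * \<rho> i (Suc t)"
    using rho_upd assms(1) by (simp add: sum_distrib_left algebra_simps)
  finally show ?thesis .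
qed

end

locale dual_iteration = push_sum +
  fixes \<gamma> \<beta> :: "nat \<Rightarrow> real" and g \<theta> u lam :: "nat \<Rightarrow> nat \<Rightarrow> 'v::real_normed_vector"
  assumes gamma_pos: "\<forall>i\<in>{1..m}. \<gamma> i > 0"
    and beta_pos: "\<forall>t\<ge>1. \<beta> t > 0"
    and u_upd: "\<forall>t. \<forall>i\<in>{1..m}. u i (t+1) = (\<Sum>j\<in>{1..m}. Wmat E t i j *\<^sub>R \<theta> j t)"
    and lam_upd: "\<forall>t. \<forall>i\<in>{1..m}. lam i (t+1) = (1 / \<rho> i (t+1)) *\<^sub>R u i (t+1)"
    and theta_upd: "\<forall>t. \<forall>i\<in>{1..m}. \<theta> i (t+1) = u i (t+1) +
        \<beta> (t+1) *\<^sub>R (g i (t+1) - \<gamma> i *\<^sub>R lam i (t+1))"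
begin

lemma u_eq_rho_lam: "i \<in> V \<Longrightarrow> u i (Suc t) = \<rho> i (Suc t) *\<^sub>R lam i (Suc t)"
  using lam_upd rho_pos[of i "Suc t"] by simp

lemma lam_Suc_le:
  assumes "\<forall>j\<in>V. norm (\<theta> j t) \<le> C * \<rho> j t" "i \<in> V"
  shows "norm (lam i (Suc t)) \<le> C"
proof -
  have "\<rho> i (Suc t) * norm (lam i (Suc t)) = norm (u i (Suc t))"
    using u_eq_rho_lam[OF assms(2)] rho_pos[OF assms(2), of "Suc t"] by (simp add: abs_of_pos)
  also have "\<dots> \<le> C * \<rho> i (Suc t)"
    using u_upd norm_mix_le[OF assms(2,1)] assms(2) by simp
  finally show ?thesis using rho_pos[OF assms(2), of "Suc t"] by (simp add: mult.commute)
qed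

lemma theta_dominated_Suc:
  assumes "\<forall>j\<in>V. norm (\<theta> j t) \<le> C * \<rho> j t"
    and "\<forall>i\<in>V. \<beta> (Suc t) * \<gamma> i \<le> \<rho> i (Suc t)"
    and "\<forall>i\<in>V. norm (g i (Suc t)) \<le> \<gamma> i * C"
  shows "\<forall>i\<in>V. norm (\<theta> i (Suc t)) \<le> C * \<rho> i (Suc t)"
proof
  fix i assume i: "i \<in> V"
  have "\<theta> i (Suc t) = (\<rho> i (Suc t) - \<beta> (Suc t) * \<gamma> i) *\<^sub>R lam i (Suc t) + \<beta> (Suc t) *\<^sub>R g i (Suc t)"
    using theta_upd u_eq_rho_lam[OF i] i by (simp add: algebra_simps)
  then show "norm (\<theta> i (Suc t)) \<le> C * \<rho> i (Suc t)"
    using norm_relaxation_le[of "\<beta> (Suc t)" "\<gamma> i" "\<rho> i (Suc t)" "lam i (Suc t)" C "g i (Suc t)"]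
      beta_pos lam_Suc_le[OF assms(1) i] assms(2,3) i by (simp add: less_imp_le)
qed

lemma lam_bounded:
  assumes beta_lim: "\<beta> \<longlonglongrightarrow> 0" and g_bounded: "\<forall>i\<in>V. \<forall>t\<ge>1. norm (g i t) \<le> G"
  shows "\<exists>D>0. \<forall>i\<in>V. \<forall>t. norm (lam i t) \<le> D"
proof -
  define \<delta> where "\<delta> = (1/real m)^(m*B)"
  have "\<delta> > 0" unfolding \<delta>_def using mpos by simp
  then have "eventually (\<lambda>t. \<beta> t * \<gamma> i < \<delta>) sequentially" for i
    by (rule order_tendstoD(2)[OF tendsto_mult_left_zero[OF beta_lim]])
  then have "eventually (\<lambda>t. \<forall>i\<in>V. \<beta> t * \<gamma> i < \<delta>) sequentially"
    by (intro eventually_ball_finite) auto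
  then obtain N where N: "\<And>t i. t \<ge> N \<Longrightarrow> i \<in> V \<Longrightarrow> \<beta> t * \<gamma> i \<le> \<rho> i t"
    unfolding eventually_sequentially \<delta>_def using rho_uniform_lower by (meson less_imp_le order_trans)
  define C where "C = (\<Sum>i\<in>V. \<bar>G\<bar> / \<gamma> i + norm (\<theta> i N) / \<rho> i N)"
  have G_div_le: "\<bar>G\<bar> / \<gamma> i \<le> C" and theta_div_le: "norm (\<theta> i N) / \<rho> i N \<le> C"
    if i: "i \<in> V" for i
  proof -
    have parts_nonneg: "0 \<le> \<bar>G\<bar> / \<gamma> j" "0 \<le> norm (\<theta> j N) / \<rho> j N" if "j \<in> V" for j
      using gamma_pos[rule_format, OF that] rho_pos[OF that, of N] by auto
    then have "\<bar>G\<bar> / \<gamma> i + norm (\<theta> i N) / \<rho> i N \<le> C"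
      unfolding C_def using i by (intro member_le_sum add_nonneg_nonneg) auto
    moreover note parts_nonneg[OF i]
    ultimately show "\<bar>G\<bar> / \<gamma> i \<le> C" "norm (\<theta> i N) / \<rho> i N \<le> C" by linarith+
  qed
  have G_le: "\<forall>i\<in>V. norm (g i (Suc t)) \<le> \<gamma> i * C" for t
  proof
    fix i assume i: "i \<in> V"
    have "norm (g i (Suc t)) \<le> G" using g_bounded[rule_format, OF i, of "Suc t"] by simp
    also have "\<dots> \<le> \<bar>G\<bar>" by simp
    also have "\<dots> \<le> \<gamma> i * C"
      using G_div_le[OF i] gamma_pos[rule_format, OF i] by (metis mult.commute pos_divide_le_eq)
    finally show "norm (g i (Suc t)) \<le> \<gamma> i * C" .
  qed
  have dominated: "\<forall>j\<in>V. norm (\<theta> j (N+s)) \<le> C * \<rho> j (N+s)" for s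
  proof (induction s)
    case 0
    show ?case
    proof
      fix j assume j: "j \<in> V"
      show "norm (\<theta> j (N+0)) \<le> C * \<rho> j (N+0)"
        using theta_div_le[OF j] rho_pos[OF j, of N] by (simp add: pos_divide_le_eq)
    qed
  next
    case (Suc s)
    have "\<forall>i\<in>V. \<beta> (Suc (N+s)) * \<gamma> i \<le> \<rho> i (Suc (N+s))" using N[of "Suc (N+s)"] by simp
    from theta_dominated_Suc[OF Suc.IH this G_le] show ?case by simp
  qed
  have "\<forall>i\<in>V. \<forall>t\<ge>Suc N. norm (lam i t) \<le> C"
  proof (intro ballI allI impI)
    fix i t assume i: "i \<in> V" and "Suc N \<le> t"
    then obtain s where "t = Suc N + s" using le_Suc_ex by blast
    then show "norm (lam i t) \<le> C" using lam_Suc_le[OF dominated[of s] i] by simp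
  qed
  then show ?thesis by (rule eventually_bounded_family_imp_bounded[OF finite_atLeastAtMost])
qed

end

theorem theorem1:
  fixes m :: nat
    and n :: "nat \<Rightarrow> nat"
    and f :: "nat \<Rightarrow> (nat \<Rightarrow> real) \<Rightarrow> real"
    and X :: "nat \<Rightarrow> (nat \<Rightarrow> real) set"
    and A :: "nat \<Rightarrow> 'p::finite \<Rightarrow> nat \<Rightarrow> real"
    and b :: "nat \<Rightarrow> real^'p"
    and \<gamma> \<tau> :: "nat \<Rightarrow> real"
    and E :: "nat \<Rightarrow> (nat \<times> nat) set"
    and Bc :: nat
    and \<beta> :: "nat \<Rightarrow> real"
    and \<theta> u lam :: "nat \<Rightarrow> nat \<Rightarrow> real^'p"
    and \<rho> :: "nat \<Rightarrow> nat \<Rightarrow> real"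
    and x :: "nat \<Rightarrow> nat \<Rightarrow> (nat \<Rightarrow> real)"
  assumes gamma_pos: "\<forall>i\<in>{1..m}. \<gamma> i > 0"
    and A1_f: "\<forall>i\<in>{1..m}. \<tau> i > 0 \<and> strongly_convex_Rn (n i) (\<tau> i) (f i)"
    and A1_X: "\<forall>i\<in>{1..m}. X i \<noteq> {} \<and> (\<forall>y\<in>X i. inRn (n i) y) \<and> convex_Rn (X i) \<and> compact (X i)"
    and edges: "\<forall>t. E t \<subseteq> {1..m} \<times> {1..m}"
    and A2: "Bc > 0" "B_strongly_connected m E Bc"
    and beta_pos: "\<forall>t\<ge>1. \<beta> t > 0"
    and beta_noninc: "\<forall>t\<ge>1. \<forall>s\<ge>t. \<beta> s \<le> \<beta> t"
    and beta_lim: "\<beta> \<longlonglongrightarrow> 0"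
    and rho0: "\<forall>i\<in>{1..m}. \<rho> i 0 = 1"
    and u_upd: "\<forall>t. \<forall>i\<in>{1..m}. u i (t+1) = (\<Sum>j\<in>{1..m}. Wmat E t i j *\<^sub>R \<theta> j t)"
    and rho_upd: "\<forall>t. \<forall>i\<in>{1..m}. \<rho> i (t+1) = (\<Sum>j\<in>{1..m}. Wmat E t i j * \<rho> j t)"
    and lam_upd: "\<forall>t. \<forall>i\<in>{1..m}. lam i (t+1) = (1 / \<rho> i (t+1)) *\<^sub>R u i (t+1)"
    and x_upd: "\<forall>t. \<forall>i\<in>{1..m}. x i (t+1) \<in> X i \<and>
        (\<forall>y\<in>X i. lagr (f i) (A i) (n i) (b i) (\<gamma> i) (x i (t+1)) (lam i (t+1))
                 \<le> lagr (f i) (A i) (n i) (b i) (\<gamma> i) y (lam i (t+1)))"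
    and theta_upd: "\<forall>t. \<forall>i\<in>{1..m}. \<theta> i (t+1) = u i (t+1) +
        \<beta> (t+1) *\<^sub>R (matvec (A i) (n i) (x i (t+1)) - b i - \<gamma> i *\<^sub>R lam i (t+1))"
  shows "\<exists>D>0. \<forall>i\<in>{1..m}. \<forall>t\<ge>1. norm (lam i t) \<le> D"
proof (cases "m = 0")
  case True
  then show ?thesis by (intro exI[of _ 1]) auto
next
  case False
  interpret dual_iteration m E Bc \<rho> \<gamma> \<beta> "\<lambda>i t. matvec (A i) (n i) (x i t) - b i" \<theta> u lam
    using False edges A2 rho0 rho_upd gamma_pos beta_pos u_upd lam_upd theta_upd
    by unfold_locales auto
  have "bounded (\<Union>i\<in>{1..m}. (\<lambda>y. matvec (A i) (n i) y - b i) ` X i)"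
    using A1_X by (intro bounded_UN ballI bounded_matvec_residual_image) auto
  then obtain G where "\<forall>i\<in>{1..m}. \<forall>y\<in>X i. norm (matvec (A i) (n i) y - b i) \<le> G"
    unfolding bounded_iff by blast
  moreover have "x i t \<in> X i" if "i \<in> {1..m}" "1 \<le> t" for i t
  proof -
    have "x i ((t - 1) + 1) \<in> X i" using x_upd that(1) by blast
    then show ?thesis using that(2) by simp
  qed
  ultimately have "\<forall>i\<in>{1..m}. \<forall>t\<ge>1. norm (matvec (A i) (n i) (x i t) - b i) \<le> G"
    by blast
  then show ?thesis using lam_bounded[OF beta_lim] by blast
qed

end
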